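(* Suppose (EDR) holds with $\beta>1$, $\mathcal H$ has embedding index $\alpha_0$ with $\frac1\beta\le\alpha_0<1$, and $f_\rho^*\in[\mathcal H]^s$ with $\|f_\rho^*\|_{[\mathcal H]^s}\le R$ for some $0<s\le\alpha_0$. Let $f_\nu=\varphi_\nu(T)S_k^*f_\rho^*$. Then for any $\nu>0$ and any $\alpha_0<\alpha\le1$, $$\|f_\nu\|_{L^\infty}\le M_\alpha E R\,\nu^{\frac{\alpha-s}{2}}.$$
   Context: $\mathcal X\subseteq\mathbb R^d$ compact, $\rho$ a distribution on $\mathcal X\times\mathcal Y$ with marginal $\mu$, $f_\rho^*(x)=\int y\,d\rho(y|x)$, $L^p=L^p(\mathcal X,\mu)$. $\mathcal H$ separable RKHS with continuous kernel $k$, $\sup_xk(x,x)\le\kappa^2$; $S_k:\mathcal H\to L^2$ inclusion, $L_k=S_kS_k^*=\sum_i\lambda_i\langle\cdot,e_i\rangle_{L^2}e_i$ ($\lambda_i$ positive non-increasing, $\{e_i\}$ ONB of $\overline{\operatorname{ran}S_k}$, $\{\lambda_i^{1/2}e_i\}$ ONB of $\mathcal H$), $T=S_k^*S_k$. $[\mathcal H]^s=\{\sum_ia_i\lambda_i^{s/2}e_i:(a_i)\in\ell^2\}$, $\|\sum a_i\lambda_i^{s/2}e_i\|_{[\mathcal H]^s}=\|(a_i)\|_{\ell^2}$. $M_\alpha$ is the smallest $A\ge0$ with $\sum_i\lambda_i^\alpha e_i(x)^2\le A^2$ $\mu$-a.e. ($=\infty$ if none), equal to the norm of $[\mathcal H]^\alpha\hookrightarrow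 L^\infty$. (EDR): $ci^{-\beta}\le\lambda_i\le Ci^{-\beta}$. Embedding index: $\alpha_0=\inf\{\alpha\in[\frac1\beta,1]:M_\alpha<\infty\}$. Filter function: $\varphi_\nu:[0,\kappa^2]\to\mathbb R^+$ with $\sup_zz^\alpha\varphi_\nu(z)\le E\nu^{1-\alpha}$ for all $\alpha\in[0,1]$ and, for some $\tau\ge1$, $\sup_z|1-z\varphi_\nu(z)|z^\alpha\le F_\tau\nu^{-\alpha}$ for $\alpha\in[0,\tau]$. *)

theory Defs
  imports "HOL-Analysis.Analysis" "HOL-Probability.Probability"
begin

text \<open>M is the marginal measure mu on the
input space; lam i (i = 0,1,2,...; index i corresponds to i+1 in the paper) are the
eigenvalues of L_k and e i the corresponding L2(mu)-orthonormal eigenfunctions, chosen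
as genuine functions (elements of H scaled by lam i powr (-1/2)).\<close>

definition rpow :: "real \<Rightarrow> real \<Rightarrow> real" where
  "rpow z a = (if a = 0 then 1 else z powr a)"

definition spectral_system ::
  "'a measure \<Rightarrow> real \<Rightarrow> (nat \<Rightarrow> real) \<Rightarrow> (nat \<Rightarrow> 'a \<Rightarrow> real) \<Rightarrow> bool" where
  "spectral_system M \<kappa> lam e \<longleftrightarrow>
     prob_space M \<and> \<kappa> > 0 \<and>
     (\<forall>i. lam i > 0) \<and> antimono lam \<and>
     (\<forall>i. e i \<in> borel_measurable M \<and> integrable M (\<lambda>x. (e i x)\<^sup>2)) \<and>
     (\<forall>i j. (\<integral>x. e i x * e j x \<partial>M) = (if i = j then 1 else 0)) \<and>
     (AE x in M. summable (\<lambda>i. lam i * (e i x)\<^sup>2) \<and> (\<Sum>i. lam i * (e i x)\<^sup>2) \<le> \<kappa>\<^sup>2)"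

definition EDR :: "(nat \<Rightarrow> real) \<Rightarrow> real \<Rightarrow> bool" where
  "EDR lam \<beta> \<longleftrightarrow> (\<exists>c C. c > 0 \<and> C > 0 \<and>
     (\<forall>i. c * real (Suc i) powr (-\<beta>) \<le> lam i \<and> lam i \<le> C * real (Suc i) powr (-\<beta>)))"

definition Mconst :: "'a measure \<Rightarrow> (nat \<Rightarrow> real) \<Rightarrow> (nat \<Rightarrow> 'a \<Rightarrow> real) \<Rightarrow> real \<Rightarrow> ereal" where
  "Mconst M lam e \<alpha> = Inf {ereal A | A. A \<ge> 0 \<and>
     (AE x in M. summable (\<lambda>i. lam i powr \<alpha> * (e i x)\<^sup>2) \<and>
                 (\<Sum>i. lam i powr \<alpha> * (e i x)\<^sup>2) \<le> A\<^sup>2)}"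

definition emb_index :: "'a measure \<Rightarrow> (nat \<Rightarrow> real) \<Rightarrow> (nat \<Rightarrow> 'a \<Rightarrow> real) \<Rightarrow> real \<Rightarrow> real" where
  "emb_index M lam e \<beta> = Inf {\<alpha>. 1/\<beta> \<le> \<alpha> \<and> \<alpha> \<le> 1 \<and> Mconst M lam e \<alpha> < \<infinity>}"

definition in_interp_ball ::
  "'a measure \<Rightarrow> (nat \<Rightarrow> real) \<Rightarrow> (nat \<Rightarrow> 'a \<Rightarrow> real) \<Rightarrow> real \<Rightarrow> real \<Rightarrow> ('a \<Rightarrow> real) \<Rightarrow> bool" where
  "in_interp_ball M lam e s R f \<longleftrightarrow>
     f \<in> borel_measurable M \<and> integrable M (\<lambda>x. (f x)\<^sup>2) \<and>
     (\<exists>a::nat \<Rightarrow> real. summable (\<lambda>i. (a i)\<^sup>2) \<and> sqrt (\<Sum>i. (a i)\<^sup>2) \<le> R \<and>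
        (\<lambda>n. \<integral>x. (f x - (\<Sum>i<n. a i * lam i powr (s/2) * e i x))\<^sup>2 \<partial>M) \<longlonglongrightarrow> 0)"

definition filter_function ::
  "(real \<Rightarrow> real \<Rightarrow> real) \<Rightarrow> real \<Rightarrow> real \<Rightarrow> real \<Rightarrow> real \<Rightarrow> bool" where
  "filter_function \<phi> \<kappa> E F \<tau> \<longleftrightarrow> \<tau> \<ge> 1 \<and>
     (\<forall>\<nu>>0. \<forall>z\<in>{0..\<kappa>\<^sup>2}. \<phi> \<nu> z \<ge> 0) \<and>
     (\<forall>\<nu>>0. \<forall>\<alpha>\<in>{0..1}. \<forall>z\<in>{0..\<kappa>\<^sup>2}. rpow z \<alpha> * \<phi> \<nu> z \<le> E * \<nu> powr (1 - \<alpha>)) \<and>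
     (\<forall>\<nu>>0. \<forall>\<alpha>\<in>{0..\<tau>}. \<forall>z\<in>{0..\<kappa>\<^sup>2}. \<bar>1 - z * \<phi> \<nu> z\<bar> * rpow z \<alpha> \<le> F * \<nu> powr (-\<alpha>))"

text \<open>f_nu = phi_nu(T) S_k^* f, written in the eigenbasis: S_k^* f = sum_i lam_i <f,e_i> e_i
  and phi_nu(T) acts on the eigenvector lam_i^(1/2) e_i of T by multiplication with
  phi_nu(lam_i).\<close>
definition f_nu ::
  "'a measure \<Rightarrow> (nat \<Rightarrow> real) \<Rightarrow> (nat \<Rightarrow> 'a \<Rightarrow> real) \<Rightarrow> (real \<Rightarrow> real \<Rightarrow> real) \<Rightarrow> real \<Rightarrow> ('a \<Rightarrow> real) \<Rightarrow> 'a \<Rightarrow> real" where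
  "f_nu M lam e \<phi> \<nu> f x = (\<Sum>i. \<phi> \<nu> (lam i) * lam i * (\<integral>y. f y * e i y \<partial>M) * e i x)"

definition Linf_norm :: "'a measure \<Rightarrow> ('a \<Rightarrow> real) \<Rightarrow> ereal" where
  "Linf_norm M f = esssup M (\<lambda>x. ereal \<bar>f x\<bar>)"

end

theory Submission
  imports Defs
begin

(* Writing fstar = sum_i a_i lam_i^(s/2) e_i, orthonormality identifies the coefficients of
   f_nu as phi_nu(lam_i) lam_i^(1+s/2) a_i = lam_i^(alpha/2) * w_i a_i with
   w_i = phi_nu(lam_i) lam_i^(1-theta), theta = (alpha-s)/2 in [0,1].  The filter bound with
   exponent 1-theta gives |w_i| <= E nu^theta, so by Cauchy-Schwarz
   |f_nu(x)| <= (sum_i lam_i^alpha e_i(x)^2)^(1/2) * E nu^theta ||a||, and the first factor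
   is at most M_alpha almost everywhere. *)

lemma abs_mult_le_weighted_squares:
  fixes x y t :: real
  assumes "t > 0"
  shows "\<bar>x * y\<bar> \<le> (t * x\<^sup>2 + y\<^sup>2 / t) / 2"
proof -
  have "0 \<le> (t * \<bar>x\<bar> - \<bar>y\<bar>)\<^sup>2" by simp
  then have "2 * t * \<bar>x * y\<bar> \<le> t\<^sup>2 * x\<^sup>2 + y\<^sup>2"
    by (simp add: power2_eq_square algebra_simps abs_mult)
  with assms show ?thesis
    by (simp add: field_simps power2_eq_square)
qed

lemma summable_mult_of_summable_squares:
  fixes u v :: "nat \<Rightarrow> real"
  assumes "summable (\<lambda>i. (u i)\<^sup>2)" and "summable (\<lambda>i. (v i)\<^sup>2)"
  shows "summable (\<lambda>i. u i * v i)"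
proof (rule summable_comparison_test')
  show "summable (\<lambda>i. ((u i)\<^sup>2 + (v i)\<^sup>2) / 2)"
    using assms by (intro summable_divide summable_add)
  show "norm (u i * v i) \<le> ((u i)\<^sup>2 + (v i)\<^sup>2) / 2" for i
    using abs_mult_le_weighted_squares[of 1 "u i" "v i"] by simp
qed

lemma Cauchy_Schwarz_suminf:
  fixes u v :: "nat \<Rightarrow> real"
  assumes u: "summable (\<lambda>i. (u i)\<^sup>2)" and v: "summable (\<lambda>i. (v i)\<^sup>2)"
  shows "\<bar>\<Sum>i. u i * v i\<bar> \<le> sqrt (\<Sum>i. (u i)\<^sup>2) * sqrt (\<Sum>i. (v i)\<^sup>2)"
proof (rule LIMSEQ_le_const2)
  show "(\<lambda>n. \<bar>\<Sum>i<n. u i * v i\<bar>) \<longlonglongrightarrow> \<bar>\<Sum>i. u i * v i\<bar>"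
    using summable_mult_of_summable_squares[OF u v] by (intro tendsto_rabs summable_LIMSEQ)
  show "\<exists>N. \<forall>n\<ge>N. \<bar>\<Sum>i<n. u i * v i\<bar> \<le> sqrt (\<Sum>i. (u i)\<^sup>2) * sqrt (\<Sum>i. (v i)\<^sup>2)"
  proof (intro exI allI impI)
    fix n
    have "\<bar>\<Sum>i<n. u i * v i\<bar> \<le> sqrt ((\<Sum>i<n. (u i)\<^sup>2) * (\<Sum>i<n. (v i)\<^sup>2))"
      using real_sqrt_le_mono[OF Cauchy_Schwarz_ineq_sum] by simp
    also have "\<dots> \<le> sqrt ((\<Sum>i. (u i)\<^sup>2) * (\<Sum>i. (v i)\<^sup>2))"
      by (intro real_sqrt_le_mono mult_mono sum_le_suminf u v suminf_nonneg sum_nonneg) auto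
    finally show "\<bar>\<Sum>i<n. u i * v i\<bar> \<le> sqrt (\<Sum>i. (u i)\<^sup>2) * sqrt (\<Sum>i. (v i)\<^sup>2)"
      by (simp add: real_sqrt_mult)
  qed
qed

lemma summable_squares_mult_bounded:
  fixes w a :: "nat \<Rightarrow> real"
  assumes a: "summable (\<lambda>i. (a i)\<^sup>2)" and w: "\<And>i. \<bar>w i\<bar> \<le> K"
  shows "summable (\<lambda>i. (w i * a i)\<^sup>2)"
    and "sqrt (\<Sum>i. (w i * a i)\<^sup>2) \<le> K * sqrt (\<Sum>i. (a i)\<^sup>2)"
proof -
  have K: "K \<ge> 0" using w[of 0] by linarith
  have le: "(w i * a i)\<^sup>2 \<le> K\<^sup>2 * (a i)\<^sup>2" for i
  proof -
    have "(w i)\<^sup>2 \<le> K\<^sup>2" using power_mono[OF w[of i] abs_ge_zero, of 2] by simp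
    then show ?thesis unfolding power_mult_distrib by (rule mult_right_mono) simp
  qed
  show sum: "summable (\<lambda>i. (w i * a i)\<^sup>2)"
    by (rule summable_comparison_test'[OF summable_mult[OF a]]) (use le in simp)
  have "(\<Sum>i. (w i * a i)\<^sup>2) \<le> K\<^sup>2 * (\<Sum>i. (a i)\<^sup>2)"
    unfolding suminf_mult[OF a, symmetric] by (intro suminf_le le sum summable_mult a)
  then have "sqrt (\<Sum>i. (w i * a i)\<^sup>2) \<le> sqrt (K\<^sup>2 * (\<Sum>i. (a i)\<^sup>2))"
    by (rule real_sqrt_le_mono)
  with K show "sqrt (\<Sum>i. (w i * a i)\<^sup>2) \<le> K * sqrt (\<Sum>i. (a i)\<^sup>2)"
    by (simp add: real_sqrt_mult)
qed

lemma integrable_mult_of_square_integrable: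
  fixes f g :: "'a \<Rightarrow> real"
  assumes [measurable]: "f \<in> borel_measurable M" "g \<in> borel_measurable M"
    and "integrable M (\<lambda>x. (f x)\<^sup>2)" "integrable M (\<lambda>x. (g x)\<^sup>2)"
  shows "integrable M (\<lambda>x. f x * g x)"
proof (rule Bochner_Integration.integrable_bound)
  show "integrable M (\<lambda>x. ((f x)\<^sup>2 + (g x)\<^sup>2) / 2)" using assms by auto
  show "AE x in M. norm (f x * g x) \<le> norm (((f x)\<^sup>2 + (g x)\<^sup>2) / 2)"
    using abs_mult_le_weighted_squares[of 1] by auto
qed measurable

lemma integrable_square_sum:
  fixes f :: "nat \<Rightarrow> 'a \<Rightarrow> real"
  assumes "\<And>i. f i \<in> borel_measurable M" "\<And>i. integrable M (\<lambda>x. (f i x)\<^sup>2)"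
  shows "integrable M (\<lambda>x. (\<Sum>i<n. f i x)\<^sup>2)"
  unfolding power2_eq_square sum_product
  by (intro Bochner_Integration.integrable_sum integrable_mult_of_square_integrable assms)

lemma integrable_square_diff:
  fixes f g :: "'a \<Rightarrow> real"
  assumes "f \<in> borel_measurable M" "g \<in> borel_measurable M"
    and "integrable M (\<lambda>x. (f x)\<^sup>2)" "integrable M (\<lambda>x. (g x)\<^sup>2)"
  shows "integrable M (\<lambda>x. (f x - g x)\<^sup>2)"
  unfolding power2_diff mult.assoc
  by (intro Bochner_Integration.integrable_diff Bochner_Integration.integrable_add
      integrable_mult_right integrable_mult_of_square_integrable assms)

lemma Cauchy_Schwarz_integral:
  fixes f g :: "'a \<Rightarrow> real"
  assumes [measurable]: "f \<in> borel_measurable M" "g \<in> borel_measurable M"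
    and f2: "integrable M (\<lambda>x. (f x)\<^sup>2)" and g2: "integrable M (\<lambda>x. (g x)\<^sup>2)"
  shows "\<bar>\<integral>x. f x * g x \<partial>M\<bar> \<le> sqrt (\<integral>x. (f x)\<^sup>2 \<partial>M) * sqrt (\<integral>x. (g x)\<^sup>2 \<partial>M)"
proof -
  define F G where "F = (\<integral>x. (f x)\<^sup>2 \<partial>M)" and "G = (\<integral>x. (g x)\<^sup>2 \<partial>M)"
  have "F \<ge> 0" "G \<ge> 0" unfolding F_def G_def by auto
  consider "F = 0" | "G = 0" | "F > 0" "G > 0"
    using \<open>F \<ge> 0\<close> \<open>G \<ge> 0\<close> by fastforce
  then show ?thesis
  proof cases
    case 1
    then have "AE x in M. f x = 0" using f2 by (simp add: F_def integral_nonneg_eq_0_iff_AE)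
    then have "AE x in M. f x * g x = 0" by eventually_elim simp
    then show ?thesis by (simp add: integral_eq_zero_AE)
  next
    case 2
    then have "AE x in M. g x = 0" using g2 by (simp add: G_def integral_nonneg_eq_0_iff_AE)
    then have "AE x in M. f x * g x = 0" by eventually_elim simp
    then show ?thesis by (simp add: integral_eq_zero_AE)
  next
    case 3
    define t where "t = sqrt G / sqrt F"
    have t: "t > 0" using 3 by (simp add: t_def)
    have "\<bar>\<integral>x. f x * g x \<partial>M\<bar> \<le> (\<integral>x. \<bar>f x * g x\<bar> \<partial>M)"
      by (rule integral_abs_bound)
    also have "\<dots> \<le> (\<integral>x. (t * (f x)\<^sup>2 + (g x)\<^sup>2 / t) / 2 \<partial>M)"
      using abs_mult_le_weighted_squares[OF t] f2 g2
      by (intro integral_mono integrable_abs integrable_mult_of_square_integrable) auto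
    also have "\<dots> = (t * F + G / t) / 2"
      using f2 g2 by (simp add: F_def G_def)
    also have "\<dots> = sqrt F * sqrt G"
    proof -
      have "t * F = sqrt G * (F / sqrt F)" "G / t = (G / sqrt G) * sqrt F"
        by (simp_all add: t_def)
      then show ?thesis using 3 by (simp add: real_div_sqrt)
    qed
    finally show ?thesis unfolding F_def G_def .
  qed
qed

lemma integral_mult_eq_coeff_of_L2_limit:
  fixes f :: "'a \<Rightarrow> real" and e :: "nat \<Rightarrow> 'a \<Rightarrow> real" and c :: "nat \<Rightarrow> real"
  assumes [measurable]: "\<And>j. e j \<in> borel_measurable M" "f \<in> borel_measurable M"
    and e_sq: "\<And>j. integrable M (\<lambda>x. (e j x)\<^sup>2)" and f_sq: "integrable M (\<lambda>x. (f x)\<^sup>2)"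
    and orthonormal: "\<And>i j. (\<integral>x. e i x * e j x \<partial>M) = (if i = j then 1 else 0)"
    and lim: "(\<lambda>n. \<integral>x. (f x - (\<Sum>j<n. c j * e j x))\<^sup>2 \<partial>M) \<longlonglongrightarrow> 0"
  shows "(\<integral>x. f x * e i x \<partial>M) = c i"
proof -
  define S where "S n x = (\<Sum>j<n. c j * e j x)" for n x
  have [measurable]: "S n \<in> borel_measurable M" for n
    unfolding S_def by measurable
  have S_sq: "integrable M (\<lambda>x. (S n x)\<^sup>2)" for n
    unfolding S_def by (rule integrable_square_sum) (auto simp: power_mult_distrib e_sq)
  have e_prod: "integrable M (\<lambda>x. e j x * e i x)" for j
    by (intro integrable_mult_of_square_integrable e_sq) auto
  have S_coeff: "(\<integral>x. S n x * e i x \<partial>M) = c i" if "i < n" for n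
  proof -
    have "(\<integral>x. S n x * e i x \<partial>M) = (\<Sum>j<n. c j * (\<integral>x. e j x * e i x \<partial>M))"
      unfolding S_def sum_distrib_right mult.assoc
      using e_prod by (subst Bochner_Integration.integral_sum) auto
    also have "\<dots> = c i"
      using that by (simp add: orthonormal if_distrib sum.delta cong: if_cong)
    finally show ?thesis .
  qed
  have "(\<lambda>n. \<integral>x. (f x - S n x) * e i x \<partial>M) \<longlonglongrightarrow> 0"
  proof (rule Lim_null_comparison)
    have "(\<integral>x. (e i x)\<^sup>2 \<partial>M) = 1"
      using orthonormal[of i i] by (simp add: power2_eq_square)
    then show "\<forall>\<^sub>F n in sequentially.
        norm (\<integral>x. (f x - S n x) * e i x \<partial>M) \<le> sqrt (\<integral>x. (f x - S n x)\<^sup>2 \<partial>M)"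
      using Cauchy_Schwarz_integral[of "\<lambda>x. f x - S n x" M "e i" for n]
      by (simp add: integrable_square_diff f_sq S_sq e_sq)
    show "(\<lambda>n. sqrt (\<integral>x. (f x - S n x)\<^sup>2 \<partial>M)) \<longlonglongrightarrow> 0"
      using tendsto_real_sqrt[OF lim] by (simp add: S_def)
  qed
  moreover have "\<forall>\<^sub>F n in sequentially.
      (\<integral>x. (f x - S n x) * e i x \<partial>M) = (\<integral>x. f x * e i x \<partial>M) - c i"
  proof (rule eventually_sequentiallyI[of "Suc i"])
    fix n assume "Suc i \<le> n"
    moreover have "integrable M (\<lambda>x. f x * e i x)" "integrable M (\<lambda>x. S n x * e i x)"
      by (intro integrable_mult_of_square_integrable f_sq S_sq e_sq; simp)+
    ultimately show "(\<integral>x. (f x - S n x) * e i x \<partial>M) = (\<integral>x. f x * e i x \<partial>M) - c i"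
      by (simp add: left_diff_distrib S_coeff)
  qed
  ultimately have "(\<lambda>n. (\<integral>x. f x * e i x \<partial>M) - c i) \<longlonglongrightarrow> 0"
    using tendsto_cong by force
  then show ?thesis
    by (simp add: LIMSEQ_const_iff)
qed

lemma (in prob_space) eigenvalue_le_of_kernel_bound:
  fixes lam :: "nat \<Rightarrow> real" and e :: "nat \<Rightarrow> 'a \<Rightarrow> real"
  assumes lam_nonneg: "\<And>j. lam j \<ge> 0"
    and e_sq: "integrable M (\<lambda>x. (e i x)\<^sup>2)" and e_norm: "(\<integral>x. (e i x)\<^sup>2 \<partial>M) = 1"
    and kernel: "AE x in M. summable (\<lambda>j. lam j * (e j x)\<^sup>2) \<and> (\<Sum>j. lam j * (e j x)\<^sup>2) \<le> \<kappa>\<^sup>2"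
  shows "lam i \<le> \<kappa>\<^sup>2"
proof -
  have "AE x in M. lam i * (e i x)\<^sup>2 \<le> \<kappa>\<^sup>2"
    using kernel
  proof eventually_elim
    case (elim x)
    then have "(\<Sum>j\<in>{i}. lam j * (e j x)\<^sup>2) \<le> (\<Sum>j. lam j * (e j x)\<^sup>2)"
      by (intro sum_le_suminf) (auto intro: mult_nonneg_nonneg lam_nonneg)
    with elim show ?case by simp
  qed
  then have "(\<integral>x. lam i * (e i x)\<^sup>2 \<partial>M) \<le> (\<integral>x. \<kappa>\<^sup>2 \<partial>M)"
    by (intro integral_mono_AE) (auto intro: e_sq)
  then show ?thesis
    using e_norm by (simp add: prob_space)
qed

lemma spectral_system_eigenvalue_le:
  assumes "spectral_system M \<kappa> lam e"
  shows "lam i \<le> \<kappa>\<^sup>2"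
proof -
  interpret prob_space M
    using assms unfolding spectral_system_def by blast
  have "\<And>j. lam j > 0" and "\<And>j. integrable M (\<lambda>x. (e j x)\<^sup>2)"
    and "\<And>j k. (\<integral>x. e j x * e k x \<partial>M) = (if j = k then 1 else 0)"
    and "AE x in M. summable (\<lambda>j. lam j * (e j x)\<^sup>2) \<and> (\<Sum>j. lam j * (e j x)\<^sup>2) \<le> \<kappa>\<^sup>2"
    using assms unfolding spectral_system_def by auto
  then show ?thesis
    by (intro eigenvalue_le_of_kernel_bound) (auto simp: less_imp_le power2_eq_square)
qed

lemma in_interp_ball_coefficients:
  assumes sys: "spectral_system M \<kappa> lam e" and f: "in_interp_ball M lam e s R f"
  obtains a where "summable (\<lambda>i. (a i)\<^sup>2)" "sqrt (\<Sum>i. (a i)\<^sup>2) \<le> R"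
    "\<And>i. (\<integral>x. f x * e i x \<partial>M) = a i * lam i powr (s/2)"
proof -
  have e_meas: "\<And>j. e j \<in> borel_measurable M" and e_sq: "\<And>j. integrable M (\<lambda>x. (e j x)\<^sup>2)"
    and orthonormal: "\<And>j k. (\<integral>x. e j x * e k x \<partial>M) = (if j = k then 1 else 0)"
    using sys unfolding spectral_system_def by auto
  have f_meas: "f \<in> borel_measurable M" and f_sq: "integrable M (\<lambda>x. (f x)\<^sup>2)"
    using f unfolding in_interp_ball_def by auto
  obtain a where "summable (\<lambda>i. (a i)\<^sup>2)" "sqrt (\<Sum>i. (a i)\<^sup>2) \<le> R"
    and lim: "(\<lambda>n. \<integral>x. (f x - (\<Sum>i<n. a i * lam i powr (s/2) * e i x))\<^sup>2 \<partial>M) \<longlonglongrightarrow> 0"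
    using f unfolding in_interp_ball_def by blast
  moreover have "(\<integral>x. f x * e i x \<partial>M) = a i * lam i powr (s/2)" for i
    by (rule integral_mult_eq_coeff_of_L2_limit[OF e_meas f_meas e_sq f_sq orthonormal])
      (use lim in simp)
  ultimately show ?thesis
    using that by blast
qed

lemma filter_function_powr_bound:
  assumes "filter_function \<phi> \<kappa> E F \<tau>" "\<nu> > 0" "\<theta> \<in> {0..1}" "0 < z" "z \<le> \<kappa>\<^sup>2"
  shows "\<bar>\<phi> \<nu> z * z powr (1 - \<theta>)\<bar> \<le> E * \<nu> powr \<theta>"
proof -
  have "\<forall>\<alpha>\<in>{0..1}. \<forall>z\<in>{0..\<kappa>\<^sup>2}. rpow z \<alpha> * \<phi> \<nu> z \<le> E * \<nu> powr (1 - \<alpha>)"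
    and "\<forall>z\<in>{0..\<kappa>\<^sup>2}. \<phi> \<nu> z \<ge> 0"
    using assms(1,2) unfolding filter_function_def by blast+
  moreover have "1 - \<theta> \<in> {0..1}" "z \<in> {0..\<kappa>\<^sup>2}"
    using assms(3-5) by auto
  ultimately have "rpow z (1 - \<theta>) * \<phi> \<nu> z \<le> E * \<nu> powr (1 - (1 - \<theta>))" "\<phi> \<nu> z \<ge> 0"
    by blast+
  moreover have "rpow z (1 - \<theta>) = z powr (1 - \<theta>)"
    using \<open>0 < z\<close> by (simp add: rpow_def)
  ultimately show ?thesis
    by (simp add: mult.commute)
qed

lemma f_nu_eq_suminf_powr:
  assumes "\<And>i. lam i \<ge> 0" and "\<And>i. (\<integral>y. f y * e i y \<partial>M) = a i * lam i powr (s/2)"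
  shows "f_nu M lam e \<phi> \<nu> f x
    = (\<Sum>i. lam i powr (\<alpha>/2) * e i x * (\<phi> \<nu> (lam i) * lam i powr (1 - (\<alpha> - s)/2) * a i))"
proof -
  have "lam i powr (\<alpha>/2) * lam i powr (1 - (\<alpha> - s)/2) = lam i * lam i powr (s/2)" for i
  proof -
    have "lam i powr (\<alpha>/2) * lam i powr (1 - (\<alpha> - s)/2) = lam i powr (1 + s/2)"
      by (simp add: add_divide_distrib diff_divide_distrib flip: powr_add)
    also have "\<dots> = lam i * lam i powr (s/2)"
      using assms(1)[of i] by (simp add: powr_add powr_one)
    finally show ?thesis .
  qed
  then show ?thesis
    unfolding f_nu_def assms(2) by (simp add: algebra_simps)
qed

lemma Linf_norm_le_Mconst_mult:
  fixes f :: "'a \<Rightarrow> real" and v :: "nat \<Rightarrow> real"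
  assumes f_meas: "f \<in> borel_measurable M"
    and f_eq: "\<And>x. f x = (\<Sum>i. lam i powr (\<alpha>/2) * e i x * v i)"
    and v_sq: "summable (\<lambda>i. (v i)\<^sup>2)" and v_norm: "sqrt (\<Sum>i. (v i)\<^sup>2) \<le> C"
  shows "Linf_norm M f \<le> Mconst M lam e \<alpha> * ereal C"
proof -
  have v_nonneg: "(\<Sum>i. (v i)\<^sup>2) \<ge> 0"
    by (simp add: suminf_nonneg v_sq)
  with v_norm have C: "C \<ge> 0"
    using real_sqrt_ge_zero order_trans by blast
  have pointwise: "\<bar>f x\<bar> \<le> A * C"
    if A: "A \<ge> 0" "summable (\<lambda>i. lam i powr \<alpha> * (e i x)\<^sup>2)"
      "(\<Sum>i. lam i powr \<alpha> * (e i x)\<^sup>2) \<le> A\<^sup>2" for A x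
  proof -
    have sq: "(lam i powr (\<alpha>/2) * e i x)\<^sup>2 = lam i powr \<alpha> * (e i x)\<^sup>2" for i
      by (simp add: power_mult_distrib power2_eq_square flip: powr_add)
    have "\<bar>f x\<bar> \<le> sqrt (\<Sum>i. lam i powr \<alpha> * (e i x)\<^sup>2) * sqrt (\<Sum>i. (v i)\<^sup>2)"
      using Cauchy_Schwarz_suminf[of "\<lambda>i. lam i powr (\<alpha>/2) * e i x" v] A(2) v_sq
      unfolding f_eq sq by simp
    also have "\<dots> \<le> A * C"
      using A real_sqrt_le_mono[OF A(3)] v_norm v_nonneg by (intro mult_mono) auto
    finally show ?thesis .
  qed
  show ?thesis
  proof (cases "C = 0")
    case True
    \<comment> \<open>Here Mconst may be infinite; since infinity * 0 = 0 in ereal, f must vanish outright.\<close>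
    then have "(\<Sum>i. (v i)\<^sup>2) = 0"
      using v_norm v_nonneg by simp
    then have "f x = 0" for x
      using suminf_eq_zero_iff[OF v_sq] unfolding f_eq by simp
    then have "Linf_norm M f \<le> 0"
      unfolding Linf_norm_def by (intro esssup_I) auto
    with True show ?thesis
      by (simp add: zero_ereal_def[symmetric])
  next
    case False
    with C have "C > 0" by simp
    have "Linf_norm M f \<le> Inf {ereal C * y | y. \<exists>A. y = ereal A \<and> A \<ge> 0 \<and>
        (AE x in M. summable (\<lambda>i. lam i powr \<alpha> * (e i x)\<^sup>2) \<and>
                    (\<Sum>i. lam i powr \<alpha> * (e i x)\<^sup>2) \<le> A\<^sup>2)}"
    proof (rule Inf_greatest, clarify)
      fix A assume "A \<ge> 0" and "AE x in M. summable (\<lambda>i. lam i powr \<alpha> * (e i x)\<^sup>2) \<and>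
                    (\<Sum>i. lam i powr \<alpha> * (e i x)\<^sup>2) \<le> A\<^sup>2"
      from this(2) have "AE x in M. ereal \<bar>f x\<bar> \<le> ereal C * ereal A"
        by eventually_elim (use \<open>A \<ge> 0\<close> pointwise in \<open>simp add: mult.commute\<close>)
      then show "Linf_norm M f \<le> ereal C * ereal A"
        unfolding Linf_norm_def using f_meas by (intro esssup_I) auto
    qed
    also have "\<dots> = ereal C * Mconst M lam e \<alpha>"
      unfolding Mconst_def using \<open>C > 0\<close> by (rule ereal_Inf_cmult)
    finally show ?thesis
      by (simp add: mult.commute)
  qed
qed

theorem lemma7:
  fixes M :: "'a measure" and lam :: "nat \<Rightarrow> real" and e :: "nat \<Rightarrow> 'a \<Rightarrow> real"
    and \<kappa> \<beta> s R E F \<tau> \<nu> \<alpha> :: real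
    and \<phi> :: "real \<Rightarrow> real \<Rightarrow> real" and fstar :: "'a \<Rightarrow> real"
  assumes sys: "spectral_system M \<kappa> lam e"
    and edr: "EDR lam \<beta>" and beta: "\<beta> > 1"
    and idx: "1/\<beta> \<le> emb_index M lam e \<beta>" "emb_index M lam e \<beta> < 1"
    and filt: "filter_function \<phi> \<kappa> E F \<tau>"
    and s: "0 < s" "s \<le> emb_index M lam e \<beta>"
    and fstar: "in_interp_ball M lam e s R fstar"
    and nu: "\<nu> > 0"
    and alpha: "emb_index M lam e \<beta> < \<alpha>" "\<alpha> \<le> 1"
  shows "Linf_norm M (f_nu M lam e \<phi> \<nu> fstar)
           \<le> Mconst M lam e \<alpha> * ereal (E * R * \<nu> powr ((\<alpha> - s) / 2))"
proof -
  have lam_pos: "\<And>i. lam i > 0" and [measurable]: "\<And>i. e i \<in> borel_measurable M"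
    using sys unfolding spectral_system_def by auto
  obtain a where a_sq: "summable (\<lambda>i. (a i)\<^sup>2)" and a_norm: "sqrt (\<Sum>i. (a i)\<^sup>2) \<le> R"
    and coeff: "\<And>i. (\<integral>x. fstar x * e i x \<partial>M) = a i * lam i powr (s/2)"
    using in_interp_ball_coefficients[OF sys fstar] by blast
  define w where "w i = \<phi> \<nu> (lam i) * lam i powr (1 - (\<alpha> - s)/2)" for i
  define K where "K = E * \<nu> powr ((\<alpha> - s)/2)"
  have w_bound: "\<bar>w i\<bar> \<le> K" for i
    unfolding w_def K_def using alpha s lam_pos spectral_system_eigenvalue_le[OF sys]
    by (intro filter_function_powr_bound[OF filt nu]) auto
  then have "K \<ge> 0"
    using abs_ge_zero order_trans by blast
  have wa_sq: "summable (\<lambda>i. (w i * a i)\<^sup>2)"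
    by (rule summable_squares_mult_bounded(1)[OF a_sq w_bound])
  have "sqrt (\<Sum>i. (w i * a i)\<^sup>2) \<le> K * sqrt (\<Sum>i. (a i)\<^sup>2)"
    by (rule summable_squares_mult_bounded(2)[OF a_sq w_bound])
  also have "\<dots> \<le> K * R"
    using a_norm \<open>K \<ge> 0\<close> by (rule mult_left_mono)
  finally have wa_norm: "sqrt (\<Sum>i. (w i * a i)\<^sup>2) \<le> E * R * \<nu> powr ((\<alpha> - s)/2)"
    by (simp add: K_def mult_ac)
  have "f_nu M lam e \<phi> \<nu> fstar x = (\<Sum>i. lam i powr (\<alpha>/2) * e i x * (w i * a i))" for x
    using f_nu_eq_suminf_powr[OF _ coeff] lam_pos unfolding w_def by (simp add: less_imp_le mult.assoc)
  moreover have "f_nu M lam e \<phi> \<nu> fstar \<in> borel_measurable M"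
    unfolding f_nu_def[abs_def] by measurable
  ultimately show ?thesis
    using Linf_norm_le_Mconst_mult[OF _ _ wa_sq wa_norm] by blast
qed

end
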